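(* The partial functions $\Phi_\circ^{-1},\Phi_\bullet^{-1}:\mathrm{TXT}(\Delta)\to\mathrm{NW}(\Delta)$ (inverses of the injective maps $\Phi_\circ,\Phi_\bullet$, defined on their images) are unambiguously FO-definable (as transductions from text structures to nested-word structures).
   Context: Nested words: $\Delta$ finite alphabet. A nesting relation of width $n$ is a relation $\nu$ on $[n]$ with: $\nu(i,j)\Rightarrow i<j$; $\nu(i,j),\nu(i,j')\Rightarrow j=j'$ and $\nu(i,j),\nu(i',j)\Rightarrow i=i'$; $\nu(i,j),\nu(i',j'),i<i'\Rightarrow j<i'$ or $j'<j$. A nested word is $(w,\nu)$ with $w=a_1\cdots a_n\in\Delta^+$ and $\nu$ of width $n$; $\mathrm{NW}(\Delta)$ is their set, viewed as structures with domain $[n]$, unary $\mathrm{Lab}_a=\{i:a_i=a\}$, natural order $\le$, binary $\nu$. Factor $nw[i,j]=(a_i\cdots a_j,\{(k-i+1,\ell-i+1):(k,\ell)\in\nu,i\le k,\ell\le j\})$. Texts: a text is $(V,\lambda,\le_1,\le_2)$, $V$ finite nonempty, $\lambda:V\to\Delta$, $\le_1,\le_2$ linear orders, up to isomorphism, viewed as a structure with $\mathrm{Lab}_a$, $\le_1$, $\le_2$. $\tau\circ\tau'$ (resp. $\tau\bullet\tau'$) is the disjoint union with all of $\tau$ before $\tau'$ in $\le_1$, and in $\le_2$ all of $\tau$ before $\tau'$ (resp. all of $\tau'$ before $\tau$). $\mathrm{TXT}(\Delta)$ is the set of texts generated from singletons by $\circ,\bullet$. $\Phi_\circ,\Phi_\bullet:\mathrm{NW}(\Delta)\to\mathrm{TXT}(\Delta)$: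 if $\nu=\emptyset$, $\Phi_\circ(nw)=a_1\circ\cdots\circ a_n$, $\Phi_\bullet(nw)=a_1\bullet\cdots\bullet a_n$; otherwise with $i$ the least call, $j$ its return, $nw'=nw[i+1,j-1]$, $nw''=nw[j+1,n]$: $\Phi_\circ(nw)=a_1\circ\cdots\circ a_{i-1}\circ(a_i\bullet\Phi_\bullet(nw')\bullet a_j)\circ\Phi_\circ(nw'')$, $\Phi_\bullet(nw)=a_1\bullet\cdots\bullet a_{i-1}\bullet(a_i\circ\Phi_\circ(nw')\circ a_j)\bullet\Phi_\bullet(nw'')$, omitting factors for empty intervals. Definability: for signatures $\sigma_1$, $\sigma_2=(R_i)_{i\in I}$, a 1-copying definition scheme with parameters $X_1..X_n$ is $\mathcal D=(\theta,\delta,(\varphi_i)_{i\in I})$ of classical MSO($\sigma_1$) formulas with free variables among $\{X_1..X_n\}$, $\{x_1,X_1..X_n\}$, $\{x_1..x_{\rho(R_i)},X_1..X_n\}$. For $s_1$, $\bar T$ with $s_1\models\theta[\bar T]$, $\mathrm{def}_{\mathcal D}(s_1,\bar T)$ has domain $\{v:s_1\models\delta[v,\bar T]\}$ and $R_i=\{\bar v:s_1\models\varphi_i[\bar v,\bar T]\}$ within it. $\mathrm{def}_{\mathcal D}$ relates $s_1$ to all such structures; $\mathcal D$ is unambiguous if each related pair arises from at most one $\bar T$. A partial function is unambiguously FO-definable if it equals $\mathrm{def}_{\mathcal D}$ for an unambiguous $\mathcal D$ of first-order formulas. *)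

theory Defs
  imports Main
begin

record ('v, 'r) str =
  sdom :: "'v set"
  srel :: "'r \<Rightarrow> 'v list set"

definition wf_str :: "('r \<Rightarrow> nat) \<Rightarrow> ('v, 'r) str \<Rightarrow> bool" where
  "wf_str ar s \<longleftrightarrow> finite (sdom s) \<and>
     (\<forall>R. \<forall>vs \<in> srel s R. length vs = ar R \<and> set vs \<subseteq> sdom s)"

definition iso_str :: "('v, 'r) str \<Rightarrow> ('w, 'r) str \<Rightarrow> bool" where
  "iso_str A B \<longleftrightarrow> (\<exists>f. bij_betw f (sdom A) (sdom B) \<and>
      (\<forall>R. srel B R = map f ` srel A R))"

datatype 'r mso =
    Rel 'r "nat list"
  | Eq nat nat
  | Mem nat nat
  | Neg "'r mso"
  | Conj "'r mso" "'r mso"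
  | Ex1 nat "'r mso"
  | Ex2 nat "'r mso"

fun sat :: "('v, 'r) str \<Rightarrow> (nat \<Rightarrow> 'v) \<Rightarrow> (nat \<Rightarrow> 'v set) \<Rightarrow> 'r mso \<Rightarrow> bool" where
  "sat s fo so (Rel R xs) = (map fo xs \<in> srel s R)"
| "sat s fo so (Eq x y) = (fo x = fo y)"
| "sat s fo so (Mem x X) = (fo x \<in> so X)"
| "sat s fo so (Neg \<phi>) = (\<not> sat s fo so \<phi>)"
| "sat s fo so (Conj \<phi> \<psi>) = (sat s fo so \<phi> \<and> sat s fo so \<psi>)"
| "sat s fo so (Ex1 x \<phi>) = (\<exists>v \<in> sdom s. sat s (fo(x := v)) so \<phi>)"
| "sat s fo so (Ex2 X \<phi>) = (\<exists>V. V \<subseteq> sdom s \<and> sat s fo (so(X := V)) \<phi>)"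

fun fv1 :: "'r mso \<Rightarrow> nat set" where
  "fv1 (Rel R xs) = set xs"
| "fv1 (Eq x y) = {x, y}"
| "fv1 (Mem x X) = {x}"
| "fv1 (Neg \<phi>) = fv1 \<phi>"
| "fv1 (Conj \<phi> \<psi>) = fv1 \<phi> \<union> fv1 \<psi>"
| "fv1 (Ex1 x \<phi>) = fv1 \<phi> - {x}"
| "fv1 (Ex2 X \<phi>) = fv1 \<phi>"

fun fv2 :: "'r mso \<Rightarrow> nat set" where
  "fv2 (Rel R xs) = {}"
| "fv2 (Eq x y) = {}"
| "fv2 (Mem x X) = {X}"
| "fv2 (Neg \<phi>) = fv2 \<phi>"
| "fv2 (Conj \<phi> \<psi>) = fv2 \<phi> \<union> fv2 \<psi>"
| "fv2 (Ex1 x \<phi>) = fv2 \<phi>"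
| "fv2 (Ex2 X \<phi>) = fv2 \<phi> - {X}"

text \<open>First-order formulas: no set quantifiers (free set variables, i.e. parameters, allowed).\<close>
fun is_FO :: "'r mso \<Rightarrow> bool" where
  "is_FO (Rel R xs) = True"
| "is_FO (Eq x y) = True"
| "is_FO (Mem x X) = True"
| "is_FO (Neg \<phi>) = is_FO \<phi>"
| "is_FO (Conj \<phi> \<psi>) = (is_FO \<phi> \<and> is_FO \<psi>)"
| "is_FO (Ex1 x \<phi>) = is_FO \<phi>"
| "is_FO (Ex2 X \<phi>) = False"

text \<open>Parameters X_1..X_n are the set variables 0..<n; the first-order variables
x_1,...,x_k are the variables 0..<k.\<close>
record ('r1, 'r2) defscheme =
  nparams :: nat
  dtheta :: "'r1 mso"
  ddelta :: "'r1 mso"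
  dphi :: "'r2 \<Rightarrow> 'r1 mso"

definition wf_scheme :: "('r2 \<Rightarrow> nat) \<Rightarrow> ('r1, 'r2) defscheme \<Rightarrow> bool" where
  "wf_scheme ar2 D \<longleftrightarrow>
     fv1 (dtheta D) = {} \<and> fv2 (dtheta D) \<subseteq> {..<nparams D} \<and>
     fv1 (ddelta D) \<subseteq> {0} \<and> fv2 (ddelta D) \<subseteq> {..<nparams D} \<and>
     (\<forall>R. fv1 (dphi D R) \<subseteq> {..<ar2 R} \<and> fv2 (dphi D R) \<subseteq> {..<nparams D})"

definition FO_scheme :: "('r1, 'r2) defscheme \<Rightarrow> bool" where
  "FO_scheme D \<longleftrightarrow> is_FO (dtheta D) \<and> is_FO (ddelta D) \<and> (\<forall>R. is_FO (dphi D R))"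

definition par_asg :: "'v set list \<Rightarrow> nat \<Rightarrow> 'v set" where
  "par_asg Ts = (\<lambda>i. if i < length Ts then Ts ! i else {})"

definition params_ok :: "('r1, 'r2) defscheme \<Rightarrow> ('v, 'r1) str \<Rightarrow> 'v set list \<Rightarrow> bool" where
  "params_ok D s Ts \<longleftrightarrow> length Ts = nparams D \<and> (\<forall>T \<in> set Ts. T \<subseteq> sdom s) \<and>
     sat s (\<lambda>_. undefined) (par_asg Ts) (dtheta D)"

definition def_str :: "('r2 \<Rightarrow> nat) \<Rightarrow> ('r1, 'r2) defscheme \<Rightarrow> ('v, 'r1) str \<Rightarrow> 'v set list
    \<Rightarrow> ('v, 'r2) str" where
  "def_str ar2 D s Ts =
    (let V = {v \<in> sdom s. sat s (\<lambda>_. v) (par_asg Ts) (ddelta D)} in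
     \<lparr> sdom = V,
       srel = (\<lambda>R. {vs. length vs = ar2 R \<and> set vs \<subseteq> V \<and>
                        sat s (\<lambda>i. vs ! i) (par_asg Ts) (dphi D R)}) \<rparr>)"

definition def_rel :: "('r2 \<Rightarrow> nat) \<Rightarrow> ('r1, 'r2) defscheme \<Rightarrow> ('v, 'r1) str
    \<Rightarrow> ('v, 'r2) str \<Rightarrow> bool" where
  "def_rel ar2 D s1 s2 \<longleftrightarrow> (\<exists>Ts. params_ok D s1 Ts \<and> s2 = def_str ar2 D s1 Ts)"

text \<open>Unambiguity: every related pair arises from at most one parameter tuple
(quantified over all finite well-formed source structures, here with domain in nat).\<close>
definition unambiguous :: "('r1 \<Rightarrow> nat) \<Rightarrow> ('r2 \<Rightarrow> nat) \<Rightarrow> ('r1, 'r2) defscheme \<Rightarrow> bool" where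
  "unambiguous ar1 ar2 D \<longleftrightarrow>
     (\<forall>(s :: (nat, 'r1) str) Ts Ts'. wf_str ar1 s \<longrightarrow> params_ok D s Ts \<longrightarrow> params_ok D s Ts' \<longrightarrow>
        def_str ar2 D s Ts = def_str ar2 D s Ts' \<longrightarrow> Ts = Ts')"

definition nesting_rel :: "nat \<Rightarrow> (nat \<times> nat) set \<Rightarrow> bool" where
  "nesting_rel n \<nu> \<longleftrightarrow> \<nu> \<subseteq> {1..n} \<times> {1..n} \<and>
     (\<forall>i j. (i, j) \<in> \<nu> \<longrightarrow> i < j) \<and>
     (\<forall>i j j'. (i, j) \<in> \<nu> \<longrightarrow> (i, j') \<in> \<nu> \<longrightarrow> j = j') \<and>
     (\<forall>i i' j. (i, j) \<in> \<nu> \<longrightarrow> (i', j) \<in> \<nu> \<longrightarrow> i = i') \<and>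
     (\<forall>i j i' j'. (i, j) \<in> \<nu> \<longrightarrow> (i', j') \<in> \<nu> \<longrightarrow> i < i' \<longrightarrow> j < i' \<or> j' < j)"

text \<open>A nested word (w, nu): w = a_1...a_n nonempty, positions 1..n (a_i = w ! (i-1)).\<close>
definition is_nw :: "'a list \<Rightarrow> (nat \<times> nat) set \<Rightarrow> bool" where
  "is_nw w \<nu> \<longleftrightarrow> w \<noteq> [] \<and> nesting_rel (length w) \<nu>"

datatype 'a nw_sym = NLab 'a | NLe | NNu

fun nw_ar :: "'a nw_sym \<Rightarrow> nat" where
  "nw_ar (NLab a) = 1" | "nw_ar NLe = 2" | "nw_ar NNu = 2"

definition nw_struct :: "'a list \<Rightarrow> (nat \<times> nat) set \<Rightarrow> (nat, 'a nw_sym) str" where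
  "nw_struct w \<nu> =
    \<lparr> sdom = {1..length w},
      srel = (\<lambda>R. case R of
          NLab a \<Rightarrow> {[i] | i. 1 \<le> i \<and> i \<le> length w \<and> w ! (i - 1) = a}
        | NLe \<Rightarrow> {[i, j] | i j. 1 \<le> i \<and> i \<le> j \<and> j \<le> length w}
        | NNu \<Rightarrow> {[i, j] | i j. (i, j) \<in> \<nu>}) \<rparr>"

definition fword :: "'a list \<Rightarrow> nat \<Rightarrow> nat \<Rightarrow> 'a list" where
  "fword w i j = take (Suc j - i) (drop (i - 1) w)"

definition frel :: "(nat \<times> nat) set \<Rightarrow> nat \<Rightarrow> nat \<Rightarrow> (nat \<times> nat) set" where
  "frel \<nu> i j = {(k + 1 - i, l + 1 - i) | k l. (k, l) \<in> \<nu> \<and> i \<le> k \<and> l \<le> j}"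

text \<open>Terms built from singletons by the two text operations: TSer = \<open>\<circ>\<close>, TPar = \<open>\<bullet>\<close>.\<close>
datatype 'a txt_term = TSing 'a | TSer "'a txt_term" "'a txt_term" | TPar "'a txt_term" "'a txt_term"

fun leaves :: "'a txt_term \<Rightarrow> 'a list" where
  "leaves (TSing a) = [a]"
| "leaves (TSer s t) = leaves s @ leaves t"
| "leaves (TPar s t) = leaves s @ leaves t"

text \<open>Positions (0-based, in the first order) listed in increasing second order.\<close>
fun ord2 :: "'a txt_term \<Rightarrow> nat list" where
  "ord2 (TSing a) = [0]"
| "ord2 (TSer s t) = ord2 s @ map (\<lambda>i. i + length (leaves s)) (ord2 t)"
| "ord2 (TPar s t) = map (\<lambda>i. i + length (leaves s)) (ord2 t) @ ord2 s"

datatype 'a txt_sym = TLab 'a | Ord1 | Ord2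

fun txt_ar :: "'a txt_sym \<Rightarrow> nat" where
  "txt_ar (TLab a) = 1" | "txt_ar Ord1 = 2" | "txt_ar Ord2 = 2"

definition text_of :: "'a txt_term \<Rightarrow> (nat, 'a txt_sym) str" where
  "text_of t =
    (let n = length (leaves t) in
     \<lparr> sdom = {0..<n},
       srel = (\<lambda>R. case R of
           TLab a \<Rightarrow> {[i] | i. i < n \<and> leaves t ! i = a}
         | Ord1 \<Rightarrow> {[i, j] | i j. i \<le> j \<and> j < n}
         | Ord2 \<Rightarrow> {[ord2 t ! p, ord2 t ! q] | p q. p \<le> q \<and> q < n}) \<rparr>)"

definition TXT :: "('v, 'a txt_sym) str set" where
  "TXT = {s. \<exists>t. iso_str (text_of t) s}"

section \<open>The maps Phi_circ (c = True) and Phi_bullet (c = False)\<close>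

fun comb :: "bool \<Rightarrow> 'a txt_term list \<Rightarrow> 'a txt_term" where
  "comb c [] = undefined"
| "comb c [t] = t"
| "comb c (t # ts) = (if c then TSer t (comb c ts) else TPar t (comb c ts))"

text \<open>List of the top-level factors of Phi_c(nw) (empty for the empty word); the natural-number
argument is recursion fuel, and length w fuel always suffices since the recursive calls are on
strictly shorter factors.\<close>
fun phil :: "nat \<Rightarrow> bool \<Rightarrow> 'a list \<Rightarrow> (nat \<times> nat) set \<Rightarrow> 'a txt_term list" where
  "phil 0 c w \<nu> = map TSing w"
| "phil (Suc f) c w \<nu> =
    (if \<nu> = {} then map TSing w
     else (let i = (LEAST i. \<exists>j. (i, j) \<in> \<nu>);
               j = (THE j. (i, j) \<in> \<nu>);
               n = length w
           in map TSing (take (i - 1) w) @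
              [comb (\<not> c) ([TSing (w ! (i - 1))] @
                     phil f (\<not> c) (fword w (i + 1) (j - 1)) (frel \<nu> (i + 1) (j - 1)) @
                     [TSing (w ! (j - 1))])] @
              phil f c (fword w (j + 1) n) (frel \<nu> (j + 1) n)))"

definition Phi :: "bool \<Rightarrow> 'a list \<Rightarrow> (nat \<times> nat) set \<Rightarrow> 'a txt_term" where
  "Phi c w \<nu> = comb c (phil (length w) c w \<nu>)"

end

(*
  The first order of the text \<Phi>\<^sub>c(w, \<nu>) is the order of the positions of w.  For positions
  x < y, the second order reverses them iff (the number of arcs of \<nu> enclosing both is odd) = c,
  since every enclosing arc switches between \<circ> and \<bullet>.  This parity P x y is
  first-order expressible in the text, and \<nu> is recovered from it: (x, y) is an arc iff P
  changes both when x moves one step to the left and when y moves one step to the right.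

  The parameterless scheme keeps the positions with their labels and first order, defines the
  arcs by this formula, and takes as domain formula the statement that the defined arcs form a
  nesting relation whose enclosure parities reproduce P.  This holds in every text
  \<Phi>\<^sub>c(w, \<nu>); conversely a text satisfying it equals \<Phi>\<^sub>c of its label word and the defined
  arcs, because a text is determined by its labels and its reversed pairs.
*)

theory Submission
  imports Defs
begin

section \<open>Texts and their second order\<close>

fun swapped :: "'a txt_term \<Rightarrow> nat \<Rightarrow> nat \<Rightarrow> bool" where
  "swapped (TSing a) x y = False"
| "swapped (TSer s u) x y =
    (if y < length (leaves s) then swapped s x y
     else if length (leaves s) \<le> x then swapped u (x - length (leaves s)) (y - length (leaves s))
     else False)"
| "swapped (TPar s u) x y =
    (if y < length (leaves s) then swapped s x y
     else if length (leaves s) \<le> x then swapped u (x - length (leaves s)) (y - length (leaves s))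
     else True)"

fun rank2 :: "'a txt_term \<Rightarrow> nat \<Rightarrow> nat" where
  "rank2 (TSing a) x = 0"
| "rank2 (TSer s u) x =
    (if x < length (leaves s) then rank2 s x else length (leaves s) + rank2 u (x - length (leaves s)))"
| "rank2 (TPar s u) x =
    (if x < length (leaves s) then length (leaves u) + rank2 s x else rank2 u (x - length (leaves s)))"

lemma length_ord2: "length (ord2 t) = length (leaves t)"
  by (induction t) auto

lemma leaves_not_Nil: "leaves t \<noteq> []"
  by (induction t) auto

lemma ord2_rank2:
  "x < length (leaves t) \<Longrightarrow> ord2 t ! rank2 t x = x \<and> rank2 t x < length (leaves t)"
proof (induction t arbitrary: x)
  case (TSer s u)
  then show ?case
    using TSer.IH(1)[of x] TSer.IH(2)[of "x - length (leaves s)"]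
    by (auto simp: nth_append length_ord2 intro: trans_less_add1 trans_less_add2)
next
  case (TPar s u)
  then show ?case
    using TPar.IH(1)[of x] TPar.IH(2)[of "x - length (leaves s)"]
    by (auto simp: nth_append length_ord2 intro: trans_less_add1 trans_less_add2)
qed simp

lemma rank2_ord2:
  "p < length (leaves t) \<Longrightarrow> rank2 t (ord2 t ! p) = p \<and> ord2 t ! p < length (leaves t)"
proof (induction t arbitrary: p)
  case (TSer s u)
  then show ?case
    using TSer.IH(1)[of p] TSer.IH(2)[of "p - length (leaves s)"]
    by (auto simp: nth_append length_ord2 intro: trans_less_add1 trans_less_add2)
next
  case (TPar s u)
  then show ?case
    using TPar.IH(2)[of p] TPar.IH(1)[of "p - length (leaves u)"]
    by (auto simp: nth_append length_ord2 intro: trans_less_add1 trans_less_add2)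
qed simp

lemma rank2_inj:
  "x < length (leaves t) \<Longrightarrow> y < length (leaves t) \<Longrightarrow> rank2 t x = rank2 t y \<Longrightarrow> x = y"
  by (metis ord2_rank2)

lemma swapped_iff_rank2:
  "x < y \<Longrightarrow> y < length (leaves t) \<Longrightarrow> swapped t x y \<longleftrightarrow> rank2 t y < rank2 t x"
proof (induction t arbitrary: x y)
  case (TSer s u)
  then show ?case
    using ord2_rank2[of x s] ord2_rank2[of "y - length (leaves s)" u] by auto
next
  case (TPar s u)
  then show ?case
    using ord2_rank2[of "y - length (leaves s)" u] by (auto simp: less_imp_add_positive trans_less_add1)
qed simp

lemma sdom_text_of: "sdom (text_of t) = {0..<length (leaves t)}"
  and srel_text_of_TLab: "srel (text_of t) (TLab a) = {[i] | i. i < length (leaves t) \<and> leaves t ! i = a}"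
  and srel_text_of_Ord1: "srel (text_of t) Ord1 = {[i, j] | i j. i \<le> j \<and> j < length (leaves t)}"
  by (simp_all add: text_of_def Let_def)

lemma srel_text_of_Ord2_rank2:
  "srel (text_of t) Ord2 =
     {[a, b] | a b. a < length (leaves t) \<and> b < length (leaves t) \<and> rank2 t a \<le> rank2 t b}"
proof -
  have "[ord2 t ! p, ord2 t ! q] \<in>
      {[a, b] | a b. a < length (leaves t) \<and> b < length (leaves t) \<and> rank2 t a \<le> rank2 t b}"
    if "p \<le> q" "q < length (leaves t)" for p q
    using that rank2_ord2[of p t] rank2_ord2[of q t] by auto
  moreover have "[a, b] \<in> srel (text_of t) Ord2"
    if "a < length (leaves t)" "b < length (leaves t)" "rank2 t a \<le> rank2 t b" for a b
  proof -
    have "[a, b] = [ord2 t ! rank2 t a, ord2 t ! rank2 t b]" "rank2 t b < length (leaves t)"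
      using that ord2_rank2 by metis+
    then show ?thesis
      using that by (auto simp: text_of_def Let_def)
  qed
  ultimately show ?thesis
    by (auto simp: text_of_def Let_def)
qed

lemma srel_text_of_Ord2:
  "srel (text_of t) Ord2 =
     {[a, b] | a b. a < length (leaves t) \<and> b < length (leaves t) \<and>
        (if a < b then \<not> swapped t a b else b < a \<longrightarrow> swapped t b a)}"
  unfolding srel_text_of_Ord2_rank2
  using swapped_iff_rank2[of _ _ t] rank2_inj[of _ t]
  by (intro Collect_cong ex_cong1 conj_cong refl) (metis linorder_neqE_nat not_le order.strict_implies_order)

lemma text_of_eqI:
  assumes "leaves t1 = leaves t2"
    and "\<And>x y. x < y \<Longrightarrow> y < length (leaves t1) \<Longrightarrow> swapped t1 x y = swapped t2 x y"
  shows "text_of t1 = text_of t2"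
proof -
  have "srel (text_of t1) Ord2 = srel (text_of t2) Ord2"
    unfolding srel_text_of_Ord2 using assms by (intro Collect_cong ex_cong1) auto
  then show ?thesis
    using assms(1) by (simp add: text_of_def Let_def)
qed

lemma Ord2_text_of_iff_swapped:
  "x < y \<Longrightarrow> y < length (leaves t) \<Longrightarrow> [y, x] \<in> srel (text_of t) Ord2 \<longleftrightarrow> swapped t x y"
  by (auto simp: srel_text_of_Ord2)

lemma text_of_rel_in_dom: "vs \<in> srel (text_of t) R \<Longrightarrow> set vs \<subseteq> sdom (text_of t)"
  by (cases R) (auto simp: sdom_text_of srel_text_of_TLab srel_text_of_Ord1 srel_text_of_Ord2)

fun swapped_list :: "bool \<Rightarrow> 'a txt_term list \<Rightarrow> nat \<Rightarrow> nat \<Rightarrow> bool" where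
  "swapped_list c [] x y = False"
| "swapped_list c (t # L) x y =
    (if y < length (leaves t) then swapped t x y
     else if length (leaves t) \<le> x then swapped_list c L (x - length (leaves t)) (y - length (leaves t))
     else \<not> c)"

abbreviation leaves_list :: "'a txt_term list \<Rightarrow> 'a list" where
  "leaves_list L \<equiv> concat (map leaves L)"

lemma leaves_comp_TSing [simp]: "leaves \<circ> TSing = (\<lambda>a. [a])"
  by auto

lemma swapped_list_append:
  "swapped_list c (A @ B) x y =
    (if y < length (leaves_list A) then swapped_list c A x y
     else if length (leaves_list A) \<le> x
       then swapped_list c B (x - length (leaves_list A)) (y - length (leaves_list A))
     else \<not> c)"
  by (induction A arbitrary: x y) (auto simp: diff_diff_add)

lemma swapped_list_TSing: "x < y \<Longrightarrow> y < length u \<Longrightarrow> swapped_list c (map TSing u) x y = (\<not> c)"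
  by (induction u arbitrary: x y) auto

lemma leaves_comb: "L \<noteq> [] \<Longrightarrow> leaves (comb c L) = leaves_list L"
  by (induction c L rule: comb.induct) auto

lemma swapped_comb:
  "L \<noteq> [] \<Longrightarrow> y < length (leaves_list L) \<Longrightarrow> swapped (comb c L) x y = swapped_list c L x y"
  by (induction c L arbitrary: x y rule: comb.induct) (auto simp: leaves_comb)

lemma swapped_list_block:
  assumes xy: "x < y" and p: "length u = p" and q: "p + length (leaves_list A) + 1 = q"
  shows "swapped_list c (map TSing u @ [comb (\<not> c) (TSing a # A @ [TSing b])] @ B) x y =
    (if x < p then \<not> c
     else if y \<le> q then (if x = p \<or> y = q then c else swapped_list (\<not> c) A (x - Suc p) (y - Suc p))
     else if x \<le> q then \<not> c
     else swapped_list c B (x - Suc q) (y - Suc q))"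
proof -
  let ?B = "TSing a # A @ [TSing b]"
  have A: "length (leaves_list A) = q - Suc p" and "p < q"
    using q by auto
  have lenB: "length (leaves (comb (\<not> c) ?B)) = Suc q - p"
    using A \<open>p < q\<close> by (simp add: leaves_comb)
  have block: "swapped (comb (\<not> c) ?B) (x - p) (y - p) =
      (if x = p \<or> y = q then c else swapped_list (\<not> c) A (x - Suc p) (y - Suc p))"
    if "p \<le> x" "y \<le> q"
  proof -
    have "swapped (comb (\<not> c) ?B) (x - p) (y - p) = swapped_list (\<not> c) ?B (x - p) (y - p)"
      using that A \<open>p < q\<close> by (intro swapped_comb) auto
    also have "\<dots> = (if x = p \<or> y = q then c else swapped_list (\<not> c) A (x - Suc p) (y - Suc p))"
      using that xy A \<open>p < q\<close> by (auto simp: swapped_list_append)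
    finally show ?thesis .
  qed
  show ?thesis
  proof (cases "x < p")
    case True
    then show ?thesis
      using swapped_list_TSing[of x y u c] xy p by (simp add: swapped_list_append)
  next
    case False
    then have "swapped_list c (map TSing u @ [comb (\<not> c) ?B] @ B) x y =
        swapped_list c (comb (\<not> c) ?B # B) (x - p) (y - p)"
      using xy p by (simp add: swapped_list_append)
    also have "\<dots> = (if y \<le> q then (if x = p \<or> y = q then c else swapped_list (\<not> c) A (x - Suc p) (y - Suc p))
        else if x \<le> q then \<not> c else swapped_list c B (x - Suc q) (y - Suc q))"
      using False block lenB xy \<open>p < q\<close> by auto
    finally show ?thesis
      using False by simp
  qed
qed

section \<open>Nesting relations and enclosing arcs\<close>

lemma nesting_rel_bounds:
  "nesting_rel n \<nu> \<Longrightarrow> (k, l) \<in> \<nu> \<Longrightarrow> 1 \<le> k \<and> k \<le> n \<and> 1 \<le> l \<and> l \<le> n"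
  unfolding nesting_rel_def by auto

lemma nesting_rel_less: "nesting_rel n \<nu> \<Longrightarrow> (k, l) \<in> \<nu> \<Longrightarrow> k < l"
  unfolding nesting_rel_def by auto

lemma nesting_rel_right_unique:
  "nesting_rel n \<nu> \<Longrightarrow> (k, l) \<in> \<nu> \<Longrightarrow> (k, l') \<in> \<nu> \<Longrightarrow> l = l'"
  unfolding nesting_rel_def by blast

lemma nesting_rel_left_unique:
  "nesting_rel n \<nu> \<Longrightarrow> (k, l) \<in> \<nu> \<Longrightarrow> (k', l) \<in> \<nu> \<Longrightarrow> k = k'"
  unfolding nesting_rel_def by blast

lemma nesting_rel_nested:
  "nesting_rel n \<nu> \<Longrightarrow> (k, l) \<in> \<nu> \<Longrightarrow> (k', l') \<in> \<nu> \<Longrightarrow> k < k' \<Longrightarrow> l < k' \<or> l' < l"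
  unfolding nesting_rel_def by blast

lemma nesting_rel_finite: "nesting_rel n \<nu> \<Longrightarrow> finite \<nu>"
  unfolding nesting_rel_def by (auto intro: finite_subset)

lemma length_fword: "1 \<le> a \<Longrightarrow> b \<le> length w \<Longrightarrow> length (fword w a b) = Suc b - a"
  by (simp add: fword_def)

lemma nesting_rel_frel:
  assumes N: "nesting_rel n \<nu>" and "1 \<le> a" "b \<le> n"
  shows "nesting_rel (Suc b - a) (frel \<nu> a b)"
proof -
  have shift: "\<exists>k l. (k, l) \<in> \<nu> \<and> a \<le> k \<and> k < l \<and> l \<le> b \<and> p = (Suc k - a, Suc l - a)"
    if "p \<in> frel \<nu> a b" for p
    using that nesting_rel_less[OF N] by (auto simp: frel_def)
  show ?thesis
    unfolding nesting_rel_def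
  proof (intro conjI allI impI)
    show "frel \<nu> a b \<subseteq> {1..Suc b - a} \<times> {1..Suc b - a}"
      using shift by fastforce
    show "i < j" if "(i, j) \<in> frel \<nu> a b" for i j
      using shift[OF that] by auto
  next
    fix i j j' assume "(i, j) \<in> frel \<nu> a b" "(i, j') \<in> frel \<nu> a b"
    then obtain k l k' l' where "(k, l) \<in> \<nu>" "(k', l') \<in> \<nu>" "a \<le> k" "a \<le> k'" "k < l" "k' < l'"
      "(i, j) = (Suc k - a, Suc l - a)" "(i, j') = (Suc k' - a, Suc l' - a)"
      using shift by metis
    moreover from this have "k' = k"
      by auto
    ultimately show "j = j'"
      using nesting_rel_right_unique[OF N, of k l l'] by auto
  next
    fix i i' j assume "(i, j) \<in> frel \<nu> a b" "(i', j) \<in> frel \<nu> a b"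
    then obtain k l k' l' where "(k, l) \<in> \<nu>" "(k', l') \<in> \<nu>" "a \<le> k" "a \<le> k'" "k < l" "k' < l'"
      "(i, j) = (Suc k - a, Suc l - a)" "(i', j) = (Suc k' - a, Suc l' - a)"
      using shift by metis
    moreover from this have "l' = l"
      by auto
    ultimately show "i = i'"
      using nesting_rel_left_unique[OF N, of k l k'] by auto
  next
    fix i j i' j' assume "(i, j) \<in> frel \<nu> a b" "(i', j') \<in> frel \<nu> a b" "i < i'"
    then obtain k l k' l' where "(k, l) \<in> \<nu>" "(k', l') \<in> \<nu>" "a \<le> k" "a \<le> k'" "k < l" "k' < l'"
      "(i, j) = (Suc k - a, Suc l - a)" "(i', j') = (Suc k' - a, Suc l' - a)" "i < i'"
      using shift by metis
    moreover from this have "k < k'"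
      by auto
    ultimately show "j < i' \<or> j' < j"
      using nesting_rel_nested[OF N, of k l k' l'] by (auto intro: diff_less_mono)
  qed
qed

definition encl_count :: "(nat \<times> nat) set \<Rightarrow> nat \<Rightarrow> nat \<Rightarrow> nat" where
  "encl_count \<nu> X Y = card {p \<in> \<nu>. fst p \<le> X \<and> Y \<le> snd p}"

lemma encl_count_frel:
  assumes "nesting_rel n \<nu>"
  shows "encl_count (frel \<nu> a b) X Y =
    card {p \<in> \<nu>. a \<le> fst p \<and> snd p \<le> b \<and> Suc (fst p) - a \<le> X \<and> Y \<le> Suc (snd p) - a}"
proof -
  let ?g = "\<lambda>(k, l). (Suc k - a, Suc l - a)"
  let ?S = "{p \<in> \<nu>. a \<le> fst p \<and> snd p \<le> b \<and> Suc (fst p) - a \<le> X \<and> Y \<le> Suc (snd p) - a}"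
  have "{p \<in> frel \<nu> a b. fst p \<le> X \<and> Y \<le> snd p} = ?g ` ?S"
    unfolding frel_def by force
  moreover have "inj_on ?g ?S"
    using nesting_rel_less[OF assms] by (force simp: inj_on_def)
  ultimately show ?thesis
    unfolding encl_count_def by (simp add: card_image)
qed

lemma encl_count_Suc_left:
  assumes N: "nesting_rel n \<nu>"
  shows "encl_count \<nu> (Suc X) Y = encl_count \<nu> X Y + (if \<exists>l. Y \<le> l \<and> (Suc X, l) \<in> \<nu> then 1 else 0)"
proof -
  let ?A = "{p \<in> \<nu>. fst p \<le> X \<and> Y \<le> snd p}" and ?B = "{p \<in> \<nu>. fst p = Suc X \<and> Y \<le> snd p}"
  have "{p \<in> \<nu>. fst p \<le> Suc X \<and> Y \<le> snd p} = ?A \<union> ?B" "?A \<inter> ?B = {}"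
    by auto
  moreover have "card ?B = (if \<exists>l. Y \<le> l \<and> (Suc X, l) \<in> \<nu> then 1 else 0)"
  proof (cases "\<exists>l. Y \<le> l \<and> (Suc X, l) \<in> \<nu>")
    case True
    then obtain l where "Y \<le> l" "(Suc X, l) \<in> \<nu>"
      by blast
    then have "?B = {(Suc X, l)}"
      by (auto dest: nesting_rel_right_unique[OF N, of "Suc X" l])
    then show ?thesis
      using True by simp
  qed (auto simp: card_eq_0_iff)
  ultimately show ?thesis
    unfolding encl_count_def using nesting_rel_finite[OF N] by (simp add: card_Un_disjoint)
qed

lemma encl_count_Suc_right:
  assumes N: "nesting_rel n \<nu>"
  shows "encl_count \<nu> X Y = encl_count \<nu> X (Suc Y) + (if \<exists>k. k \<le> X \<and> (k, Y) \<in> \<nu> then 1 else 0)"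
proof -
  let ?A = "{p \<in> \<nu>. fst p \<le> X \<and> Suc Y \<le> snd p}" and ?B = "{p \<in> \<nu>. fst p \<le> X \<and> snd p = Y}"
  have "{p \<in> \<nu>. fst p \<le> X \<and> Y \<le> snd p} = ?A \<union> ?B" "?A \<inter> ?B = {}"
    by auto
  moreover have "card ?B = (if \<exists>k. k \<le> X \<and> (k, Y) \<in> \<nu> then 1 else 0)"
  proof (cases "\<exists>k. k \<le> X \<and> (k, Y) \<in> \<nu>")
    case True
    then obtain k where "k \<le> X" "(k, Y) \<in> \<nu>"
      by blast
    then have "?B = {(k, Y)}"
      by (auto dest: nesting_rel_left_unique[OF N, of _ Y k])
    then show ?thesis
      using True by simp
  qed (auto simp: card_eq_0_iff)
  ultimately show ?thesis
    unfolding encl_count_def using nesting_rel_finite[OF N] by (simp add: card_Un_disjoint)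
qed

lemma encl_count_0_left: "nesting_rel n \<nu> \<Longrightarrow> encl_count \<nu> 0 Y = 0"
  unfolding encl_count_def by (metis (no_types, lifting) card.empty empty_Collect_eq
      le_zero_eq nesting_rel_bounds not_one_le_zero prod.collapse)

lemma encl_count_beyond: "nesting_rel n \<nu> \<Longrightarrow> encl_count \<nu> X (Suc n) = 0"
  unfolding encl_count_def by (metis (no_types, lifting) card.empty empty_Collect_eq
      nesting_rel_bounds not_less_eq_eq prod.collapse)

locale first_arc =
  fixes n :: nat and \<nu> :: "(nat \<times> nat) set" and i j :: nat
  assumes nesting: "nesting_rel n \<nu>"
    and arc: "(i, j) \<in> \<nu>"
    and first: "\<And>k l. (k, l) \<in> \<nu> \<Longrightarrow> i \<le> k"
begin

lemma bounds: "1 \<le> i" "i < j" "j \<le> n"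
  using nesting_rel_bounds[OF nesting arc] nesting_rel_less[OF nesting arc] by auto

lemma return_unique: "(i, l) \<in> \<nu> \<Longrightarrow> l = j"
  using nesting_rel_right_unique[OF nesting arc] by blast

lemma inner_arc: "(k, l) \<in> \<nu> \<Longrightarrow> i < k \<Longrightarrow> k \<le> j \<Longrightarrow> l < j"
  using nesting_rel_nested[OF nesting arc] by fastforce

lemma arc_enclosing_return:
  assumes "(k, l) \<in> \<nu>" "k \<le> j" "j \<le> l"
  shows "k = i \<and> l = j"
proof (cases "k = i")
  case False
  then have "l < j"
    using assms first[of k l] inner_arc[of k l] by simp
  then show ?thesis
    using assms by simp
qed (use assms return_unique in blast)

lemma encl_count_before:
  assumes "X < i"
  shows "encl_count \<nu> X Y = 0"
proof -
  have "{p \<in> \<nu>. fst p \<le> X \<and> Y \<le> snd p} = {}"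
    using assms first by fastforce
  then show ?thesis
    unfolding encl_count_def by (metis card.empty)
qed

lemma encl_count_across:
  assumes "X \<le> j" "j < Y"
  shows "encl_count \<nu> X Y = 0"
proof -
  have "{p \<in> \<nu>. fst p \<le> X \<and> Y \<le> snd p} = {}"
    using assms arc_enclosing_return by fastforce
  then show ?thesis
    unfolding encl_count_def by (metis card.empty)
qed

lemma encl_count_inside:
  assumes "i \<le> X" "X < Y" "Y \<le> j"
  shows "encl_count \<nu> X Y =
    (if i < X \<and> Y < j then Suc (encl_count (frel \<nu> (Suc i) (j - 1)) (X - i) (Y - i)) else 1)"
proof -
  let ?inner = "{p \<in> \<nu>. i < fst p \<and> fst p \<le> X \<and> Y \<le> snd p}"
  have "{p \<in> \<nu>. fst p \<le> X \<and> Y \<le> snd p} = insert (i, j) ?inner"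
  proof (intro equalityI subsetI)
    fix p assume "p \<in> {p \<in> \<nu>. fst p \<le> X \<and> Y \<le> snd p}"
    then show "p \<in> insert (i, j) ?inner"
      using first[of "fst p" "snd p"] return_unique[of "snd p"] by (cases p) auto
  next
    fix p assume "p \<in> insert (i, j) ?inner"
    then show "p \<in> {p \<in> \<nu>. fst p \<le> X \<and> Y \<le> snd p}"
      using assms arc by auto
  qed
  moreover have "finite ?inner"
    using nesting_rel_finite[OF nesting] by simp
  ultimately have split: "encl_count \<nu> X Y = Suc (card ?inner)"
    unfolding encl_count_def by simp
  show ?thesis
  proof (cases "i < X \<and> Y < j")
    case True
    have "?inner = {p \<in> \<nu>. Suc i \<le> fst p \<and> snd p \<le> j - 1 \<and> Suc (fst p) - Suc i \<le> X - i \<and> Y - i \<le> Suc (snd p) - Suc i}"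
    proof (intro equalityI subsetI)
      fix p assume "p \<in> ?inner"
      then show "p \<in> {p \<in> \<nu>. Suc i \<le> fst p \<and> snd p \<le> j - 1 \<and> Suc (fst p) - Suc i \<le> X - i \<and> Y - i \<le> Suc (snd p) - Suc i}"
        using True assms inner_arc[of "fst p" "snd p"] by (cases p) auto
    next
      fix p assume "p \<in> {p \<in> \<nu>. Suc i \<le> fst p \<and> snd p \<le> j - 1 \<and> Suc (fst p) - Suc i \<le> X - i \<and> Y - i \<le> Suc (snd p) - Suc i}"
      then show "p \<in> ?inner"
        using True assms by auto
    qed
    then show ?thesis
      using True split encl_count_frel[OF nesting, of "Suc i" "j - 1" "X - i" "Y - i"] by simp
  next
    case False
    have "?inner = {}"
    proof (intro equals0I)
      fix p assume "p \<in> ?inner"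
      then show False
        using False assms inner_arc[of "fst p" "snd p"] by (cases p) auto
    qed
    then show ?thesis
      using False split by (simp only: card.empty) simp
  qed
qed

lemma encl_count_after:
  assumes "j < X" "X < Y" "Y \<le> n"
  shows "encl_count \<nu> X Y = encl_count (frel \<nu> (Suc j) n) (X - j) (Y - j)"
proof -
  have "{p \<in> \<nu>. fst p \<le> X \<and> Y \<le> snd p} =
      {p \<in> \<nu>. Suc j \<le> fst p \<and> snd p \<le> n \<and> Suc (fst p) - Suc j \<le> X - j \<and> Y - j \<le> Suc (snd p) - Suc j}"
  proof (intro equalityI subsetI)
    fix p assume p: "p \<in> {p \<in> \<nu>. fst p \<le> X \<and> Y \<le> snd p}"
    then have "Suc j \<le> fst p"
      using assms arc_enclosing_return[of "fst p" "snd p"] by (cases p) force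
    then show "p \<in> {p \<in> \<nu>. Suc j \<le> fst p \<and> snd p \<le> n \<and> Suc (fst p) - Suc j \<le> X - j \<and> Y - j \<le> Suc (snd p) - Suc j}"
      using p nesting_rel_bounds[OF nesting, of "fst p" "snd p"] by auto
  next
    fix p assume "p \<in> {p \<in> \<nu>. Suc j \<le> fst p \<and> snd p \<le> n \<and> Suc (fst p) - Suc j \<le> X - j \<and> Y - j \<le> Suc (snd p) - Suc j}"
    then show "p \<in> {p \<in> \<nu>. fst p \<le> X \<and> Y \<le> snd p}"
      using assms by auto
  qed
  then show ?thesis
    using encl_count_frel[OF nesting, of "Suc j" n "X - j" "Y - j"] unfolding encl_count_def by simp
qed

lemma Least_call: "(LEAST k. \<exists>l. (k, l) \<in> \<nu>) = i"
  using arc first by (intro Least_equality) auto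

lemma The_return: "(THE l. (i, l) \<in> \<nu>) = j"
  using arc return_unique by blast

lemma phil_Suc:
  assumes "length w = n"
  shows "phil (Suc f) c w \<nu> =
    map TSing (take (i - 1) w) @
    [comb (\<not> c) (TSing (w ! (i - 1)) #
        phil f (\<not> c) (fword w (Suc i) (j - 1)) (frel \<nu> (Suc i) (j - 1)) @ [TSing (w ! (j - 1))])] @
    phil f c (fword w (Suc j) n) (frel \<nu> (Suc j) n)"
  using arc assms by (auto simp: Let_def Least_call The_return)

end

lemma first_arc_exists:
  assumes "nesting_rel n \<nu>" "\<nu> \<noteq> {}"
  shows "\<exists>i j. first_arc n \<nu> i j"
proof -
  define i where "i = (LEAST k. \<exists>l. (k, l) \<in> \<nu>)"
  obtain j where "(i, j) \<in> \<nu>"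
    using assms(2) LeastI_ex[of "\<lambda>k. \<exists>l. (k, l) \<in> \<nu>"] unfolding i_def by auto
  moreover have "i \<le> k" if "(k, l) \<in> \<nu>" for k l
    using that unfolding i_def by (blast intro: Least_le)
  ultimately show ?thesis
    using assms(1) by (blast intro: first_arc.intro)
qed

section \<open>The second order of \<open>\<Phi>\<^sub>c\<close>\<close>

text \<open>Text positions are 0-based, nested-word positions 1-based.\<close>

definition swaps_by_parity :: "bool \<Rightarrow> (nat \<times> nat) set \<Rightarrow> 'a txt_term list \<Rightarrow> bool" where
  "swaps_by_parity c \<nu> L \<longleftrightarrow> (\<forall>x y. x < y \<longrightarrow> y < length (leaves_list L) \<longrightarrow>
     swapped_list c L x y = (odd (encl_count \<nu> (Suc x) (Suc y)) = c))"

lemma (in first_arc) swaps_by_parity_arc_block: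
  assumes u: "length u = i - 1"
    and L1: "length (leaves_list L1) = j - Suc i" and L2: "length (leaves_list L2) = n - j"
    and P1: "swaps_by_parity (\<not> c) (frel \<nu> (Suc i) (j - 1)) L1"
    and P2: "swaps_by_parity c (frel \<nu> (Suc j) n) L2"
  shows "swaps_by_parity c \<nu> (map TSing u @ [comb (\<not> c) (TSing a # L1 @ [TSing b])] @ L2)"
  unfolding swaps_by_parity_def
proof (intro allI impI)
  let ?L = "map TSing u @ [comb (\<not> c) (TSing a # L1 @ [TSing b])] @ L2"
  fix x y assume xy: "x < y" and "y < length (leaves_list ?L)"
  then have "y < n"
    using u L1 L2 bounds by (simp add: leaves_comb)
  have "i - 1 + length (leaves_list L1) + 1 = j - 1"
    using L1 bounds by simp
  note block = swapped_list_block[OF xy u this, where c = c and a = a and b = b and B = L2]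
  consider (before) "x < i - 1"
    | (boundary) "i - 1 \<le> x" "y \<le> j - 1" "x = i - 1 \<or> y = j - 1"
    | (inside) "i - 1 < x" "y < j - 1"
    | (across) "i - 1 \<le> x" "x \<le> j - 1" "j - 1 < y"
    | (after) "j - 1 < x"
    by linarith
  then show "swapped_list c ?L x y = (odd (encl_count \<nu> (Suc x) (Suc y)) = c)"
  proof cases
    case before
    then show ?thesis
      using block encl_count_before[of "Suc x" "Suc y"] by simp
  next
    case boundary
    then show ?thesis
      using block encl_count_inside[of "Suc x" "Suc y"] xy bounds by auto
  next
    case inside
    then have "swapped_list (\<not> c) L1 (x - i) (y - i) =
        (odd (encl_count (frel \<nu> (Suc i) (j - 1)) (Suc (x - i)) (Suc (y - i))) = (\<not> c))"
      using P1 xy L1 bounds unfolding swaps_by_parity_def by auto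
    moreover have "Suc x - i = Suc (x - i)" "Suc y - i = Suc (y - i)"
      using inside xy by auto
    ultimately show ?thesis
      using inside block encl_count_inside[of "Suc x" "Suc y"] xy bounds by auto
  next
    case across
    then show ?thesis
      using block encl_count_across[of "Suc x" "Suc y"] xy bounds by auto
  next
    case after
    then have "swapped_list c L2 (x - j) (y - j) =
        (odd (encl_count (frel \<nu> (Suc j) n) (Suc (x - j)) (Suc (y - j))) = c)"
      using P2 xy L2 \<open>y < n\<close> unfolding swaps_by_parity_def by auto
    moreover have "Suc x - j = Suc (x - j)" "Suc y - j = Suc (y - j)"
      using after xy by auto
    ultimately show ?thesis
      using after block encl_count_after[of "Suc x" "Suc y"] xy bounds \<open>y < n\<close> by auto
  qed
qed

lemma split_at_arc:
  assumes "1 \<le> i" "i < j" "j \<le> length w"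
  shows "take (i - 1) w @ w ! (i - 1) # fword w (Suc i) (j - 1) @ w ! (j - 1) # fword w (Suc j) (length w) = w"
proof -
  have "w = take (j - 1) w @ w ! (j - 1) # drop j w"
    using assms id_take_nth_drop[of "j - 1" w] by simp
  also have "take (j - 1) w = take i w @ fword w (Suc i) (j - 1)"
    using assms take_add[of i "j - 1 - i" w] by (simp add: fword_def)
  also have "take i w = take (i - 1) w @ [w ! (i - 1)]"
    using assms take_Suc_conv_app_nth[of "i - 1" w] by simp
  also have "drop j w = fword w (Suc j) (length w)"
    by (simp add: fword_def)
  finally show ?thesis
    by simp
qed

lemma phil_swaps_by_parity:
  "nesting_rel (length w) \<nu> \<Longrightarrow> length w \<le> f \<Longrightarrow>
    leaves_list (phil f c w \<nu>) = w \<and> swaps_by_parity c \<nu> (phil f c w \<nu>)"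
proof (induction f arbitrary: c w \<nu>)
  case 0
  then show ?case
    by (simp add: swaps_by_parity_def)
next
  case (Suc f)
  show ?case
  proof (cases "\<nu> = {}")
    case True
    then show ?thesis
      by (simp add: swaps_by_parity_def encl_count_def swapped_list_TSing)
  next
    case False
    then obtain i j where "first_arc (length w) \<nu> i j"
      using first_arc_exists Suc.prems(1) by blast
    then interpret first_arc "length w" \<nu> i j .
    let ?w1 = "fword w (Suc i) (j - 1)" and ?\<nu>1 = "frel \<nu> (Suc i) (j - 1)"
    let ?w2 = "fword w (Suc j) (length w)" and ?\<nu>2 = "frel \<nu> (Suc j) (length w)"
    have len: "length ?w1 = j - Suc i" "length ?w2 = length w - j"
      using bounds length_fword[of "Suc i" "j - 1" w] length_fword[of "Suc j" "length w" w] by auto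
    have IH1: "leaves_list (phil f (\<not> c) ?w1 ?\<nu>1) = ?w1 \<and> swaps_by_parity (\<not> c) ?\<nu>1 (phil f (\<not> c) ?w1 ?\<nu>1)"
      using Suc.IH nesting_rel_frel[OF nesting, of "Suc i" "j - 1"] len bounds Suc.prems(2) by simp
    have IH2: "leaves_list (phil f c ?w2 ?\<nu>2) = ?w2 \<and> swaps_by_parity c ?\<nu>2 (phil f c ?w2 ?\<nu>2)"
      using Suc.IH nesting_rel_frel[OF nesting, of "Suc j" "length w"] len bounds Suc.prems(2) by simp
    show ?thesis
      unfolding phil_Suc[OF refl]
    proof
      show "leaves_list (map TSing (take (i - 1) w) @
          [comb (\<not> c) (TSing (w ! (i - 1)) # phil f (\<not> c) ?w1 ?\<nu>1 @ [TSing (w ! (j - 1))])] @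
          phil f c ?w2 ?\<nu>2) = w"
        using IH1 IH2 split_at_arc[OF bounds] by (simp add: leaves_comb)
      show "swaps_by_parity c \<nu> (map TSing (take (i - 1) w) @
          [comb (\<not> c) (TSing (w ! (i - 1)) # phil f (\<not> c) ?w1 ?\<nu>1 @ [TSing (w ! (j - 1))])] @
          phil f c ?w2 ?\<nu>2)"
        using IH1 IH2 len bounds by (intro swaps_by_parity_arc_block) auto
    qed
  qed
qed

lemma leaves_Phi: "is_nw w \<nu> \<Longrightarrow> leaves (Phi c w \<nu>) = w"
  and swapped_Phi: "is_nw w \<nu> \<Longrightarrow> x < y \<Longrightarrow> y < length w \<Longrightarrow>
    swapped (Phi c w \<nu>) x y = (odd (encl_count \<nu> (Suc x) (Suc y)) = c)"
proof -
  assume "is_nw w \<nu>"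
  then have "leaves_list (phil (length w) c w \<nu>) = w \<and> swaps_by_parity c \<nu> (phil (length w) c w \<nu>)"
    and "w \<noteq> []"
    using phil_swaps_by_parity[of w \<nu>] by (auto simp: is_nw_def)
  moreover from this have "phil (length w) c w \<nu> \<noteq> []"
    by auto
  ultimately show "leaves (Phi c w \<nu>) = w"
    and "x < y \<Longrightarrow> y < length w \<Longrightarrow> swapped (Phi c w \<nu>) x y = (odd (encl_count \<nu> (Suc x) (Suc y)) = c)"
    unfolding Phi_def by (auto simp: leaves_comb swapped_comb swaps_by_parity_def)
qed

section \<open>Recovering the arcs from the parities\<close>

definition encl_parity :: "(nat \<times> nat) set \<Rightarrow> nat \<Rightarrow> (nat \<Rightarrow> nat \<Rightarrow> bool) \<Rightarrow> bool" where
  "encl_parity \<nu> n P \<longleftrightarrow> (\<forall>x y. x < y \<longrightarrow> y < n \<longrightarrow> P x y = odd (encl_count \<nu> (Suc x) (Suc y)))"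

text \<open>Read \<open>P x y\<close> as ``an odd number of arcs encloses x and y''.  Moving x one step left
  flips P iff an arc starts at x and reaches beyond y; moving y one step right flips it iff an
  arc ends at y and starts at or before x.  By nesting, the two flips together single out the arc from x to y.\<close>

definition parity_arc :: "nat \<Rightarrow> (nat \<Rightarrow> nat \<Rightarrow> bool) \<Rightarrow> nat \<Rightarrow> nat \<Rightarrow> bool" where
  "parity_arc n P x y \<longleftrightarrow> x < y \<and> y < n \<and>
     (P x y \<noteq> (0 < x \<and> P (x - 1) y)) \<and> (P x y \<noteq> (Suc y < n \<and> P x (Suc y)))"

definition parity_arcs :: "nat \<Rightarrow> (nat \<Rightarrow> nat \<Rightarrow> bool) \<Rightarrow> (nat \<times> nat) set" where
  "parity_arcs n P = {(Suc x, Suc y) | x y. parity_arc n P x y}"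

definition consistent_parity :: "nat \<Rightarrow> (nat \<Rightarrow> nat \<Rightarrow> bool) \<Rightarrow> bool" where
  "consistent_parity n P \<longleftrightarrow>
    (\<forall>x<n. \<forall>y<n. \<forall>y'<n. parity_arc n P x y \<and> parity_arc n P x y' \<longrightarrow> y = y') \<and>
    (\<forall>x<n. \<forall>x'<n. (\<exists>y<n. parity_arc n P x y \<and> parity_arc n P x' y) \<longrightarrow> x = x') \<and>
    (\<forall>x<n. \<forall>y<n. \<forall>x'<n. \<forall>y'<n.
       parity_arc n P x y \<and> parity_arc n P x' y' \<and> x < x' \<longrightarrow> y < x' \<or> y' < y) \<and>
    (\<forall>x<n. \<forall>y<n. x < y \<longrightarrow>
       ((P x y \<noteq> (0 < x \<and> P (x - 1) y)) \<longleftrightarrow> (\<exists>l<n. y \<le> l \<and> parity_arc n P x l)))"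

context
  fixes n \<nu> P
  assumes nesting: "nesting_rel n \<nu>" and parity: "encl_parity \<nu> n P"
begin

lemma encl_parity_left_jump:
  assumes "x < y" "y < n"
  shows "(P x y \<noteq> (0 < x \<and> P (x - 1) y)) \<longleftrightarrow> (\<exists>l. Suc y \<le> l \<and> (Suc x, l) \<in> \<nu>)"
proof -
  have "(0 < x \<and> P (x - 1) y) = odd (encl_count \<nu> x (Suc y))"
    using parity assms encl_count_0_left[OF nesting] unfolding encl_parity_def by (cases x) auto
  then show ?thesis
    using parity assms encl_count_Suc_left[OF nesting, of x "Suc y"] unfolding encl_parity_def by auto
qed

lemma encl_parity_right_jump:
  assumes "x < y" "y < n"
  shows "(P x y \<noteq> (Suc y < n \<and> P x (Suc y))) \<longleftrightarrow> (\<exists>k. k \<le> Suc x \<and> (k, Suc y) \<in> \<nu>)"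
proof -
  have "(Suc y < n \<and> P x (Suc y)) = odd (encl_count \<nu> (Suc x) (Suc (Suc y)))"
  proof (cases "Suc y < n")
    case False
    then have "Suc y = n"
      using assms by simp
    then show ?thesis
      using encl_count_beyond[OF nesting, of "Suc x"] by simp
  qed (use parity assms in \<open>simp add: encl_parity_def\<close>)
  then show ?thesis
    using parity assms encl_count_Suc_right[OF nesting, of "Suc x" "Suc y"] unfolding encl_parity_def
    by auto
qed

lemma parity_arc_iff: "parity_arc n P x y \<longleftrightarrow> (Suc x, Suc y) \<in> \<nu>"
proof
  assume arc: "parity_arc n P x y"
  then have xy: "x < y" "y < n"
    unfolding parity_arc_def by auto
  obtain l where l: "Suc y \<le> l" "(Suc x, l) \<in> \<nu>"
    using arc encl_parity_left_jump[OF xy] unfolding parity_arc_def by blast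
  obtain k where k: "k \<le> Suc x" "(k, Suc y) \<in> \<nu>"
    using arc encl_parity_right_jump[OF xy] unfolding parity_arc_def by blast
  show "(Suc x, Suc y) \<in> \<nu>"
  proof (cases "k = Suc x")
    case False
    then have "Suc y < Suc x \<or> l < Suc y"
      using k l nesting_rel_nested[OF nesting k(2) l(2)] by simp
    then show ?thesis
      using xy l by simp
  qed (use k in simp)
next
  assume arc: "(Suc x, Suc y) \<in> \<nu>"
  then have xy: "x < y" "y < n"
    using nesting_rel_less[OF nesting arc] nesting_rel_bounds[OF nesting arc] by auto
  then show "parity_arc n P x y"
    unfolding parity_arc_def using encl_parity_left_jump[OF xy] encl_parity_right_jump[OF xy] arc by auto
qed

lemma encl_parity_consistent: "consistent_parity n P"
  unfolding consistent_parity_def parity_arc_iff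
proof (intro conjI allI impI)
  fix x y y' assume "(Suc x, Suc y) \<in> \<nu> \<and> (Suc x, Suc y') \<in> \<nu>"
  then show "y = y'"
    using nesting_rel_right_unique[OF nesting] by blast
next
  fix x x' assume "\<exists>y<n. (Suc x, Suc y) \<in> \<nu> \<and> (Suc x', Suc y) \<in> \<nu>"
  then show "x = x'"
    using nesting_rel_left_unique[OF nesting] by blast
next
  fix x y x' y' assume "(Suc x, Suc y) \<in> \<nu> \<and> (Suc x', Suc y') \<in> \<nu> \<and> x < x'"
  then show "y < x' \<or> y' < y"
    using nesting_rel_nested[OF nesting, of "Suc x" "Suc y" "Suc x'" "Suc y'"] by simp
next
  fix x y assume xy: "x < y" "y < n"
  have "(\<exists>l. Suc y \<le> l \<and> (Suc x, l) \<in> \<nu>) \<longleftrightarrow> (\<exists>l<n. y \<le> l \<and> (Suc x, Suc l) \<in> \<nu>)"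
  proof
    assume "\<exists>l. Suc y \<le> l \<and> (Suc x, l) \<in> \<nu>"
    then obtain l where "Suc y \<le> l" "(Suc x, l) \<in> \<nu>"
      by blast
    then show "\<exists>l<n. y \<le> l \<and> (Suc x, Suc l) \<in> \<nu>"
      using nesting_rel_bounds[OF nesting, of "Suc x" l] by (intro exI[of _ "l - 1"]) auto
  qed auto
  then show "(P x y \<noteq> (0 < x \<and> P (x - 1) y)) \<longleftrightarrow> (\<exists>l<n. y \<le> l \<and> (Suc x, Suc l) \<in> \<nu>)"
    using encl_parity_left_jump[OF xy] by simp
qed

end

lemma parity_arcs_iff:
  "(a, b) \<in> parity_arcs n P \<longleftrightarrow> (\<exists>x y. a = Suc x \<and> b = Suc y \<and> parity_arc n P x y)"
  unfolding parity_arcs_def by auto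

lemma parity_arc_bounds: "parity_arc n P x y \<Longrightarrow> x < y \<and> y < n"
  unfolding parity_arc_def by auto

lemma consistent_parity_nesting:
  assumes "consistent_parity n P"
  shows "nesting_rel n (parity_arcs n P)"
proof -
  note arc_bounds = parity_arc_bounds[of n P]
  note C = assms[unfolded consistent_parity_def]
  have right_unique: "y = y'" if "parity_arc n P x y" "parity_arc n P x y'" for x y y'
    using C[THEN conjunct1, rule_format, of x y y'] that arc_bounds by (meson order.strict_trans)
  have left_unique: "x = x'" if "parity_arc n P x y" "parity_arc n P x' y" for x x' y
    using C[THEN conjunct2, THEN conjunct1, rule_format, of x x'] that arc_bounds by (meson order.strict_trans)
  have nested: "y < x' \<or> y' < y" if "parity_arc n P x y" "parity_arc n P x' y'" "x < x'" for x y x' y'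
    using C[THEN conjunct2, THEN conjunct2, THEN conjunct1, rule_format, of x y x' y'] that arc_bounds
    by (meson order.strict_trans)
  show ?thesis
    unfolding nesting_rel_def
  proof (intro conjI allI impI)
    show "parity_arcs n P \<subseteq> {1..n} \<times> {1..n}"
      using arc_bounds unfolding parity_arcs_def by fastforce
  next
    fix a b assume "(a, b) \<in> parity_arcs n P"
    then show "a < b"
      using arc_bounds unfolding parity_arcs_iff by auto
  next
    fix a b b' assume "(a, b) \<in> parity_arcs n P" "(a, b') \<in> parity_arcs n P"
    then show "b = b'"
      using right_unique unfolding parity_arcs_iff by blast
  next
    fix a a' b assume "(a, b) \<in> parity_arcs n P" "(a', b) \<in> parity_arcs n P"
    then show "a = a'"
      using left_unique unfolding parity_arcs_iff by blast
  next
    fix a b a' b' assume "(a, b) \<in> parity_arcs n P" "(a', b') \<in> parity_arcs n P" "a < a'"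
    then show "b < a' \<or> b' < b"
      using nested unfolding parity_arcs_iff by fastforce
  qed
qed

lemma consistent_parity_encl_parity:
  assumes C: "consistent_parity n P"
  shows "encl_parity (parity_arcs n P) n P"
proof -
  let ?\<nu> = "parity_arcs n P"
  have N: "nesting_rel n ?\<nu>"
    using consistent_parity_nesting[OF C] .
  have jump: "(P x y \<noteq> (0 < x \<and> P (x - 1) y)) \<longleftrightarrow> (\<exists>l. Suc y \<le> l \<and> (Suc x, l) \<in> ?\<nu>)"
    if "x < y" "y < n" for x y
  proof -
    have "(\<exists>l. Suc y \<le> l \<and> (Suc x, l) \<in> ?\<nu>) \<longleftrightarrow> (\<exists>l<n. y \<le> l \<and> parity_arc n P x l)"
      unfolding parity_arcs_iff using parity_arc_bounds by fastforce
    then show ?thesis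
      using C that unfolding consistent_parity_def by simp
  qed
  have "P x y = odd (encl_count ?\<nu> (Suc x) (Suc y))" if "x < y" "y < n" for x y
    using that
  proof (induction x)
    case 0
    then show ?case
      using jump[of 0 y] encl_count_Suc_left[OF N, of 0 "Suc y"] encl_count_0_left[OF N] by simp
  next
    case (Suc x)
    then show ?case
      using jump[of "Suc x" y] encl_count_Suc_left[OF N, of "Suc x" "Suc y"]
      by (cases "\<exists>l\<ge>Suc y. (Suc (Suc x), l) \<in> ?\<nu>") auto
  qed
  then show ?thesis
    unfolding encl_parity_def by blast
qed

section \<open>First-order formulas over texts\<close>

definition Disj :: "'r mso \<Rightarrow> 'r mso \<Rightarrow> 'r mso" where
  "Disj \<phi> \<psi> = Neg (Conj (Neg \<phi>) (Neg \<psi>))"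

definition Imp :: "'r mso \<Rightarrow> 'r mso \<Rightarrow> 'r mso" where
  "Imp \<phi> \<psi> = Neg (Conj \<phi> (Neg \<psi>))"

definition Iff :: "'r mso \<Rightarrow> 'r mso \<Rightarrow> 'r mso" where
  "Iff \<phi> \<psi> = Conj (Imp \<phi> \<psi>) (Imp \<psi> \<phi>)"

definition Xor :: "'r mso \<Rightarrow> 'r mso \<Rightarrow> 'r mso" where
  "Xor \<phi> \<psi> = Neg (Iff \<phi> \<psi>)"

definition All1 :: "nat \<Rightarrow> 'r mso \<Rightarrow> 'r mso" where
  "All1 x \<phi> = Neg (Ex1 x (Neg \<phi>))"

lemma sat_connectives [simp]:
  "sat s fo so (Disj \<phi> \<psi>) = (sat s fo so \<phi> \<or> sat s fo so \<psi>)"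
  "sat s fo so (Imp \<phi> \<psi>) = (sat s fo so \<phi> \<longrightarrow> sat s fo so \<psi>)"
  "sat s fo so (Iff \<phi> \<psi>) = (sat s fo so \<phi> \<longleftrightarrow> sat s fo so \<psi>)"
  "sat s fo so (Xor \<phi> \<psi>) = (sat s fo so \<phi> \<noteq> sat s fo so \<psi>)"
  "sat s fo so (All1 x \<phi>) = (\<forall>v \<in> sdom s. sat s (fo(x := v)) so \<phi>)"
  by (auto simp: Disj_def Imp_def Iff_def Xor_def All1_def)

lemma connectives_syntax [simp]:
  "fv1 (Disj \<phi> \<psi>) = fv1 \<phi> \<union> fv1 \<psi>" "fv1 (Imp \<phi> \<psi>) = fv1 \<phi> \<union> fv1 \<psi>" "fv1 (Iff \<phi> \<psi>) = fv1 \<phi> \<union> fv1 \<psi>"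
  "fv1 (Xor \<phi> \<psi>) = fv1 \<phi> \<union> fv1 \<psi>" "fv1 (All1 x \<phi>) = fv1 \<phi> - {x}"
  "fv2 (Disj \<phi> \<psi>) = fv2 \<phi> \<union> fv2 \<psi>" "fv2 (Imp \<phi> \<psi>) = fv2 \<phi> \<union> fv2 \<psi>" "fv2 (Iff \<phi> \<psi>) = fv2 \<phi> \<union> fv2 \<psi>"
  "fv2 (Xor \<phi> \<psi>) = fv2 \<phi> \<union> fv2 \<psi>" "fv2 (All1 x \<phi>) = fv2 \<phi>"
  "is_FO (Disj \<phi> \<psi>) = (is_FO \<phi> \<and> is_FO \<psi>)" "is_FO (Imp \<phi> \<psi>) = (is_FO \<phi> \<and> is_FO \<psi>)"
  "is_FO (Iff \<phi> \<psi>) = (is_FO \<phi> \<and> is_FO \<psi>)" "is_FO (Xor \<phi> \<psi>) = (is_FO \<phi> \<and> is_FO \<psi>)"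
  "is_FO (All1 x \<phi>) = is_FO \<phi>"
  by (auto simp: Disj_def Imp_def Iff_def Xor_def All1_def)

text \<open>The formulas below bind the variables 10, 11 and 12, so their arguments must be other
  variables.\<close>

definition less_fm :: "nat \<Rightarrow> nat \<Rightarrow> 'a txt_sym mso" where
  "less_fm x y = Conj (Rel Ord1 [x, y]) (Neg (Eq x y))"

definition pred_fm :: "nat \<Rightarrow> nat \<Rightarrow> 'a txt_sym mso" where
  "pred_fm p x = Conj (less_fm p x) (Neg (Ex1 12 (Conj (less_fm p 12) (less_fm 12 x))))"

definition parity_fm :: "bool \<Rightarrow> nat \<Rightarrow> nat \<Rightarrow> 'a txt_sym mso" where
  "parity_fm c x y = (if c then Rel Ord2 [y, x] else Neg (Rel Ord2 [y, x]))"

definition parity_left_fm :: "bool \<Rightarrow> nat \<Rightarrow> nat \<Rightarrow> 'a txt_sym mso" where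
  "parity_left_fm c x y = Ex1 10 (Conj (pred_fm 10 x) (parity_fm c 10 y))"

definition parity_right_fm :: "bool \<Rightarrow> nat \<Rightarrow> nat \<Rightarrow> 'a txt_sym mso" where
  "parity_right_fm c x y = Ex1 11 (Conj (pred_fm y 11) (parity_fm c x 11))"

definition arc_fm :: "bool \<Rightarrow> nat \<Rightarrow> nat \<Rightarrow> 'a txt_sym mso" where
  "arc_fm c x y = Conj (less_fm x y)
     (Conj (Xor (parity_fm c x y) (parity_left_fm c x y)) (Xor (parity_fm c x y) (parity_right_fm c x y)))"

definition consistency_fm :: "bool \<Rightarrow> 'a txt_sym mso" where
  "consistency_fm c =
     Conj (All1 0 (All1 1 (All1 2 (Imp (Conj (arc_fm c 0 1) (arc_fm c 0 2)) (Eq 1 2)))))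
     (Conj (All1 0 (All1 1 (All1 2 (Imp (Conj (arc_fm c 0 2) (arc_fm c 1 2)) (Eq 0 1)))))
     (Conj (All1 0 (All1 1 (All1 2 (All1 3
         (Imp (Conj (arc_fm c 0 1) (Conj (arc_fm c 2 3) (less_fm 0 2)))
              (Disj (less_fm 1 2) (less_fm 3 1)))))))
       (All1 0 (All1 1 (Imp (less_fm 0 1)
         (Iff (Xor (parity_fm c 0 1) (parity_left_fm c 0 1))
              (Ex1 4 (Conj (Rel Ord1 [1, 4]) (arc_fm c 0 4)))))))))"

lemma formulas_syntax [simp]:
  "is_FO (less_fm x y)" "is_FO (pred_fm p x)" "is_FO (parity_fm c x y)" "is_FO (parity_left_fm c x y)"
  "is_FO (parity_right_fm c x y)" "is_FO (arc_fm c x y)" "is_FO (consistency_fm c)"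
  "fv2 (less_fm x y) = {}" "fv2 (pred_fm p x) = {}" "fv2 (parity_fm c x y) = {}"
  "fv2 (parity_left_fm c x y) = {}" "fv2 (parity_right_fm c x y) = {}" "fv2 (arc_fm c x y) = {}"
  "fv2 (consistency_fm c) = {}"
  by (auto simp: less_fm_def pred_fm_def parity_fm_def parity_left_fm_def parity_right_fm_def
      arc_fm_def consistency_fm_def)

lemma fv1_arc_fm: "x \<notin> {10, 11, 12} \<Longrightarrow> y \<notin> {10, 11, 12} \<Longrightarrow> fv1 (arc_fm c x y) = {x, y}"
  by (auto simp: less_fm_def pred_fm_def parity_fm_def parity_left_fm_def parity_right_fm_def arc_fm_def)

lemma fv1_consistency_fm: "fv1 (consistency_fm c) = {}"
  by (auto simp: less_fm_def pred_fm_def parity_fm_def parity_left_fm_def parity_right_fm_def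
      arc_fm_def consistency_fm_def)

definition text_parity :: "bool \<Rightarrow> 'a txt_term \<Rightarrow> nat \<Rightarrow> nat \<Rightarrow> bool" where
  "text_parity c t x y \<longleftrightarrow> ([y, x] \<in> srel (text_of t) Ord2) = c"

lemma text_parity_swapped:
  "x < y \<Longrightarrow> y < length (leaves t) \<Longrightarrow> text_parity c t x y \<longleftrightarrow> swapped t x y = c"
  unfolding text_parity_def using Ord2_text_of_iff_swapped by blast

lemma sat_less_fm [simp]: "sat (text_of t) fo so (less_fm x y) \<longleftrightarrow> fo x < fo y \<and> fo y < length (leaves t)"
  by (auto simp: less_fm_def srel_text_of_Ord1)

lemma sat_parity_fm [simp]: "sat (text_of t) fo so (parity_fm c x y) = text_parity c t (fo x) (fo y)"
  by (auto simp: parity_fm_def text_parity_def)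

lemma sat_pred_fm [simp]:
  assumes "p \<noteq> 12" "x \<noteq> 12"
  shows "sat (text_of t) fo so (pred_fm p x) \<longleftrightarrow> 0 < fo x \<and> fo x < length (leaves t) \<and> fo p = fo x - 1"
proof -
  have "sat (text_of t) fo so (pred_fm p x) \<longleftrightarrow> fo p < fo x \<and> fo x < length (leaves t) \<and>
      \<not> (\<exists>v. v < length (leaves t) \<and> fo p < v \<and> v < fo x)"
    using assms by (auto simp: pred_fm_def sdom_text_of)
  also have "\<dots> \<longleftrightarrow> 0 < fo x \<and> fo x < length (leaves t) \<and> fo p = fo x - 1"
  proof
    assume between: "fo p < fo x \<and> fo x < length (leaves t) \<and> \<not> (\<exists>v. v < length (leaves t) \<and> fo p < v \<and> v < fo x)"
    then have "\<not> Suc (fo p) < fo x"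
      by auto
    then show "0 < fo x \<and> fo x < length (leaves t) \<and> fo p = fo x - 1"
      using between by auto
  qed auto
  finally show ?thesis .
qed

lemma sat_parity_left_fm [simp]:
  "x \<notin> {10, 12} \<Longrightarrow> y \<noteq> 10 \<Longrightarrow> sat (text_of t) fo so (parity_left_fm c x y) \<longleftrightarrow>
     0 < fo x \<and> fo x < length (leaves t) \<and> text_parity c t (fo x - 1) (fo y)"
  by (auto simp: parity_left_fm_def sdom_text_of)

lemma sat_parity_right_fm [simp]:
  "y \<notin> {11, 12} \<Longrightarrow> x \<noteq> 11 \<Longrightarrow> sat (text_of t) fo so (parity_right_fm c x y) \<longleftrightarrow>
     Suc (fo y) < length (leaves t) \<and> text_parity c t (fo x) (Suc (fo y))"
  by (auto simp: parity_right_fm_def sdom_text_of)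

lemma sat_arc_fm [simp]:
  "x \<notin> {10, 11, 12} \<Longrightarrow> y \<notin> {10, 11, 12} \<Longrightarrow>
    sat (text_of t) fo so (arc_fm c x y) \<longleftrightarrow> parity_arc (length (leaves t)) (text_parity c t) (fo x) (fo y)"
  by (auto simp: arc_fm_def parity_arc_def)

lemma sat_consistency_fm:
  "sat (text_of t) fo so (consistency_fm c) \<longleftrightarrow> consistent_parity (length (leaves t)) (text_parity c t)"
  unfolding consistency_fm_def consistent_parity_def by (simp add: sdom_text_of srel_text_of_Ord1 Ball_def Bex_def)

lemma encl_parity_Phi:
  assumes "is_nw w \<nu>"
  shows "encl_parity \<nu> (length w) (text_parity c (Phi c w \<nu>))"
  unfolding encl_parity_def
  using text_parity_swapped[of _ _ "Phi c w \<nu>" c] leaves_Phi[OF assms] swapped_Phi[OF assms] by auto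

lemma consistent_parity_Phi:
  assumes "is_nw w \<nu>"
  shows "consistent_parity (length (leaves (Phi c w \<nu>))) (text_parity c (Phi c w \<nu>))"
  using encl_parity_consistent[of "length w" \<nu>] encl_parity_Phi[OF assms] assms leaves_Phi[OF assms]
  by (simp add: is_nw_def)

lemma consistent_parity_Phi_inverse:
  assumes C: "consistent_parity (length (leaves t)) (text_parity c t)"
  defines "\<nu> \<equiv> parity_arcs (length (leaves t)) (text_parity c t)"
  shows "is_nw (leaves t) \<nu>" and "text_of (Phi c (leaves t) \<nu>) = text_of t"
proof -
  show nw: "is_nw (leaves t) \<nu>"
    unfolding is_nw_def \<nu>_def using consistent_parity_nesting[OF C] leaves_not_Nil by blast
  have "swapped (Phi c (leaves t) \<nu>) x y = swapped t x y" if "x < y" "y < length (leaves t)" for x y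
    using that swapped_Phi[OF nw, of x y c] text_parity_swapped[OF that, of c]
      consistent_parity_encl_parity[OF C] unfolding encl_parity_def \<nu>_def by auto
  then show "text_of (Phi c (leaves t) \<nu>) = text_of t"
    using leaves_Phi[OF nw] by (intro text_of_eqI) auto
qed

section \<open>Invariance under isomorphism\<close>

lemma iso_str_trans:
  assumes "iso_str A B" "iso_str B C"
  shows "iso_str A C"
proof -
  obtain f g where "bij_betw f (sdom A) (sdom B)" "\<forall>R. srel B R = map f ` srel A R"
    and "bij_betw g (sdom B) (sdom C)" "\<forall>R. srel C R = map g ` srel B R"
    using assms unfolding iso_str_def by blast
  then show ?thesis
    unfolding iso_str_def by (intro exI[of _ "g \<circ> f"]) (auto simp: image_image bij_betw_trans)
qed

lemma sat_iso:
  assumes bij: "bij_betw f (sdom A) (sdom B)" and rel: "\<forall>R. srel B R = map f ` srel A R"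
    and wfA: "\<And>R vs. vs \<in> srel A R \<Longrightarrow> set vs \<subseteq> sdom A"
  shows "is_FO \<phi> \<Longrightarrow> (\<forall>x\<in>fv1 \<phi>. fo x \<in> sdom A \<and> fo' x = f (fo x)) \<Longrightarrow>
    (\<forall>X. so X \<subseteq> sdom A) \<Longrightarrow> sat B fo' (\<lambda>X. f ` so X) \<phi> = sat A fo so \<phi>"
proof (induction \<phi> arbitrary: fo fo')
  have inj: "inj_on f (sdom A)"
    using bij bij_betw_imp_inj_on by blast
  {
    case (Rel R xs)
    have map_fo': "map fo' xs = map f (map fo xs)" and "set (map fo xs) \<subseteq> sdom A"
      using Rel.prems(2) by auto
    have "map f (map fo xs) \<in> map f ` srel A R \<longleftrightarrow> map fo xs \<in> srel A R"
    proof
      assume "map f (map fo xs) \<in> map f ` srel A R"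
      then obtain vs where vs: "vs \<in> srel A R" "map f (map fo xs) = map f vs"
        by auto
      have "inj_on f (set (map fo xs) \<union> set vs)"
        using inj wfA[OF vs(1)] \<open>set (map fo xs) \<subseteq> sdom A\<close> by (auto intro: inj_on_subset)
      then show "map fo xs \<in> srel A R"
        using vs map_inj_on by metis
    qed (rule imageI)
    then show ?case
      by (simp only: sat.simps rel[rule_format] map_fo')
  next
    case (Eq x y)
    then show ?case
      using inj by (auto simp: inj_on_eq_iff)
  next
    case (Mem x X)
    then show ?case
      using inj by (auto simp: inj_on_image_mem_iff)
  next
    case (Conj \<phi> \<psi>)
    then have "sat B fo' (\<lambda>X. f ` so X) \<phi> = sat A fo so \<phi>" "sat B fo' (\<lambda>X. f ` so X) \<psi> = sat A fo so \<psi>"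
      by simp_all
    then show ?case
      by simp
  next
    case (Ex1 x \<phi>)
    have "sat B (fo'(x := f u)) (\<lambda>X. f ` so X) \<phi> = sat A (fo(x := u)) so \<phi>" if "u \<in> sdom A" for u
    proof -
      have "\<forall>y\<in>fv1 \<phi>. (fo(x := u)) y \<in> sdom A \<and> (fo'(x := f u)) y = f ((fo(x := u)) y)"
        using Ex1.prems(2) that by auto
      then show ?thesis
        using Ex1.IH[of "fo(x := u)" "fo'(x := f u)"] Ex1.prems(1,3) by fastforce
    qed
    moreover have "sdom B = f ` sdom A"
      using bij bij_betw_imp_surj_on by blast
    ultimately show ?case
      by auto
  }
qed auto

lemma Collect_subset_image_map:
  assumes "\<And>us. set us \<subseteq> V \<Longrightarrow> Q (map f us) \<longleftrightarrow> P us"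
  shows "{vs. set vs \<subseteq> f ` V \<and> Q vs} = map f ` {us. set us \<subseteq> V \<and> P us}"
proof -
  have "{vs. set vs \<subseteq> f ` V \<and> Q vs} = {vs \<in> map f ` lists V. Q vs}"
    unfolding lists_image[symmetric] by auto
  also have "\<dots> = map f ` {us. set us \<subseteq> V \<and> P us}"
    using assms by auto
  finally show ?thesis .
qed

lemma def_str_iso:
  assumes iso: "iso_str A B" and wfA: "\<And>R vs. vs \<in> srel A R \<Longrightarrow> set vs \<subseteq> sdom A"
    and FO: "FO_scheme D" and wfD: "wf_scheme ar2 D"
  shows "iso_str (def_str ar2 D A []) (def_str ar2 D B [])"
proof -
  obtain f where bij: "bij_betw f (sdom A) (sdom B)" and rel: "\<forall>R. srel B R = map f ` srel A R"
    using iso unfolding iso_str_def by blast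
  have inj: "inj_on f (sdom A)" and surj: "f ` sdom A = sdom B"
    using bij by (auto simp: bij_betw_def)
  have no_params: "par_asg [] = (\<lambda>_. {})"
    by (simp add: par_asg_def)
  define VA where "VA = {v \<in> sdom A. sat A (\<lambda>_. v) (\<lambda>_. {}) (ddelta D)}"
  define VB where "VB = {v \<in> sdom B. sat B (\<lambda>_. v) (\<lambda>_. {}) (ddelta D)}"
  have delta: "sat B (\<lambda>_. f u) (\<lambda>_. {}) (ddelta D) = sat A (\<lambda>_. u) (\<lambda>_. {}) (ddelta D)"
    if "u \<in> sdom A" for u
    using sat_iso[OF bij rel wfA, where \<phi> = "ddelta D" and fo = "\<lambda>_. u" and fo' = "\<lambda>_. f u"
        and so = "\<lambda>_. {}"] FO that
    unfolding FO_scheme_def by simp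
  have VB: "VB = f ` VA"
  proof (intro equalityI subsetI)
    fix v assume "v \<in> VB"
    moreover obtain u where "u \<in> sdom A" "v = f u"
      using \<open>v \<in> VB\<close> surj unfolding VB_def by auto
    ultimately show "v \<in> f ` VA"
      using delta unfolding VA_def VB_def by auto
  qed (use delta surj in \<open>auto simp: VA_def VB_def\<close>)
  have "bij_betw f VA VB"
    unfolding VB VA_def using inj by (auto intro: inj_on_subset simp: bij_betw_def)
  moreover have "{vs. set vs \<subseteq> VB \<and> length vs = ar2 R \<and> sat B (\<lambda>i. vs ! i) (\<lambda>_. {}) (dphi D R)} =
      map f ` {us. set us \<subseteq> VA \<and> length us = ar2 R \<and> sat A (\<lambda>i. us ! i) (\<lambda>_. {}) (dphi D R)}" for R
    unfolding VB
  proof (rule Collect_subset_image_map)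
    fix us assume "set us \<subseteq> VA"
    then show "(length (map f us) = ar2 R \<and> sat B (\<lambda>i. map f us ! i) (\<lambda>_. {}) (dphi D R)) \<longleftrightarrow>
        (length us = ar2 R \<and> sat A (\<lambda>i. us ! i) (\<lambda>_. {}) (dphi D R))"
      using sat_iso[OF bij rel wfA, where \<phi> = "dphi D R" and fo = "\<lambda>i. us ! i"
          and fo' = "\<lambda>i. map f us ! i" and so = "\<lambda>_. {}"] FO wfD
      unfolding FO_scheme_def wf_scheme_def VA_def by (auto simp: subset_iff)
  qed
  ultimately show ?thesis
    unfolding iso_str_def def_str_def Let_def no_params VA_def[symmetric] VB_def[symmetric]
    by (auto simp: conj_ac)
qed

section \<open>The inverse transduction\<close>

definition inverse_scheme :: "bool \<Rightarrow> ('a txt_sym, 'a nw_sym) defscheme" where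
  "inverse_scheme c =
    \<lparr>nparams = 0, dtheta = consistency_fm c, ddelta = Eq 0 0,
     dphi = (\<lambda>R. case R of NLab a \<Rightarrow> Rel (TLab a) [0] | NLe \<Rightarrow> Rel Ord1 [0, 1] | NNu \<Rightarrow> arc_fm c 0 1)\<rparr>"

lemma wf_inverse_scheme: "wf_scheme nw_ar (inverse_scheme c)"
  unfolding wf_scheme_def inverse_scheme_def
  by (auto simp: fv1_consistency_fm fv1_arc_fm split: nw_sym.split)

lemma FO_inverse_scheme: "FO_scheme (inverse_scheme c)"
  unfolding FO_scheme_def inverse_scheme_def by (auto split: nw_sym.split)

lemma unambiguous_inverse_scheme: "unambiguous ar1 nw_ar (inverse_scheme c)"
  unfolding unambiguous_def params_ok_def inverse_scheme_def by simp

lemma def_rel_inverse_scheme_iff: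
  "def_rel nw_ar (inverse_scheme c) s1 s2 \<longleftrightarrow>
     sat s1 (\<lambda>_. undefined) (\<lambda>_. {}) (consistency_fm c) \<and> s2 = def_str nw_ar (inverse_scheme c) s1 []"
proof -
  have params: "nparams (inverse_scheme c) = 0" and theta: "dtheta (inverse_scheme c) = consistency_fm c"
    by (simp_all add: inverse_scheme_def)
  show ?thesis
    unfolding def_rel_def params_ok_def params theta by (simp add: par_asg_def)
qed

lemma sat_consistency_fm_iso:
  assumes "iso_str (text_of t) s"
  shows "sat s fo (\<lambda>_. {}) (consistency_fm c) \<longleftrightarrow> consistent_parity (length (leaves t)) (text_parity c t)"
proof -
  obtain f where bij: "bij_betw f (sdom (text_of t)) (sdom s)" and rel: "\<forall>R. srel s R = map f ` srel (text_of t) R"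
    using assms unfolding iso_str_def by blast
  have "sat s fo (\<lambda>X. f ` {}) (consistency_fm c) = sat (text_of t) (\<lambda>_. 0) (\<lambda>_. {}) (consistency_fm c)"
  proof (rule sat_iso[OF bij rel])
    show "set vs \<subseteq> sdom (text_of t)" if "vs \<in> srel (text_of t) R" for R vs
      using that by (rule text_of_rel_in_dom)
  qed (auto simp: fv1_consistency_fm)
  then show ?thesis
    using sat_consistency_fm by simp
qed

lemma srel_def_str_inverse_scheme:
  "srel (def_str nw_ar (inverse_scheme c) (text_of t) []) R =
     {vs. length vs = nw_ar R \<and> set vs \<subseteq> {0..<length (leaves t)} \<and>
        sat (text_of t) (\<lambda>i. vs ! i) (\<lambda>_. {}) (dphi (inverse_scheme c) R)}"
  unfolding def_str_def Let_def by (auto simp: inverse_scheme_def sdom_text_of par_asg_def)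

lemma sdom_def_str_inverse_scheme:
  "sdom (def_str nw_ar (inverse_scheme c) (text_of t) []) = {0..<length (leaves t)}"
  unfolding def_str_def Let_def by (auto simp: inverse_scheme_def sdom_text_of)

lemma nw_struct_parity_arcs:
  "srel (nw_struct (leaves t) (parity_arcs (length (leaves t)) (text_parity c t))) R =
     map Suc ` srel (def_str nw_ar (inverse_scheme c) (text_of t) []) R"
proof -
  let ?n = "length (leaves t)"
  have shift1: "map Suc ` {[x] | x. P x} = {[i] | i. 1 \<le> i \<and> P (i - 1)}" for P
  proof (intro equalityI subsetI)
    fix vs assume "vs \<in> {[i] | i. 1 \<le> i \<and> P (i - 1)}"
    then obtain i where "vs = [i]" "1 \<le> i" "P (i - 1)"
      by blast
    then show "vs \<in> map Suc ` {[x] | x. P x}"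
      by (intro image_eqI[of _ _ "[i - 1]"]) auto
  qed auto
  have shift2: "map Suc ` {[x, y] | x y. Q x y} = {[i, j] | i j. 1 \<le> i \<and> 1 \<le> j \<and> Q (i - 1) (j - 1)}" for Q
  proof (intro equalityI subsetI)
    fix vs assume "vs \<in> {[i, j] | i j. 1 \<le> i \<and> 1 \<le> j \<and> Q (i - 1) (j - 1)}"
    then obtain i j where "vs = [i, j]" "1 \<le> i" "1 \<le> j" "Q (i - 1) (j - 1)"
      by blast
    then show "vs \<in> map Suc ` {[x, y] | x y. Q x y}"
      by (intro image_eqI[of _ _ "[i - 1, j - 1]"]) auto
  qed auto
  have arc: "x < ?n \<and> y < ?n" if "parity_arc ?n (text_parity c t) x y" for x y
    using parity_arc_bounds[OF that] by simp
  have "srel (def_str nw_ar (inverse_scheme c) (text_of t) []) R =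
     (case R of NLab a \<Rightarrow> {[x] | x. x < ?n \<and> leaves t ! x = a}
      | NLe \<Rightarrow> {[x, y] | x y. x \<le> y \<and> y < ?n}
      | NNu \<Rightarrow> {[x, y] | x y. parity_arc ?n (text_parity c t) x y})"
    unfolding srel_def_str_inverse_scheme
    by (cases R) (auto simp: inverse_scheme_def srel_text_of_TLab srel_text_of_Ord1 length_Suc_conv
        numeral_2_eq_2 dest: arc)
  then show ?thesis
    by (cases R) (auto simp: shift1 shift2 nw_struct_def parity_arcs_def)
qed

lemma iso_nw_struct_inverse_scheme:
  "iso_str (nw_struct (leaves t) (parity_arcs (length (leaves t)) (text_parity c t)))
     (def_str nw_ar (inverse_scheme c) (text_of t) [])"
  unfolding iso_str_def
proof (intro exI[of _ "\<lambda>i. i - 1"] conjI allI)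
  show "bij_betw (\<lambda>i. i - 1) (sdom (nw_struct (leaves t) (parity_arcs (length (leaves t)) (text_parity c t))))
      (sdom (def_str nw_ar (inverse_scheme c) (text_of t) []))"
    unfolding sdom_def_str_inverse_scheme nw_struct_def
    by (intro bij_betw_byWitness[where f' = Suc]) auto
  show "srel (def_str nw_ar (inverse_scheme c) (text_of t) []) R =
      map (\<lambda>i. i - 1) ` srel (nw_struct (leaves t) (parity_arcs (length (leaves t)) (text_parity c t))) R" for R
    unfolding nw_struct_parity_arcs by (simp add: image_image comp_def)
qed

theorem corollary5p6:
  fixes c :: bool
  shows "\<exists>D :: ('a::finite txt_sym, 'a nw_sym) defscheme.
     wf_scheme nw_ar D \<and> FO_scheme D \<and> unambiguous txt_ar nw_ar D \<and>
     (\<forall>s1 :: (nat, 'a txt_sym) str. s1 \<in> TXT \<longrightarrow>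
        (\<forall>s2. def_rel nw_ar D s1 s2 \<longrightarrow>
           (\<exists>w \<nu>. is_nw w \<nu> \<and> iso_str (text_of (Phi c w \<nu>)) s1 \<and> iso_str (nw_struct w \<nu>) s2)) \<and>
        ((\<exists>w \<nu>. is_nw w \<nu> \<and> iso_str (text_of (Phi c w \<nu>)) s1) \<longrightarrow>
           (\<exists>s2. def_rel nw_ar D s1 s2)))"
proof (intro exI[of _ "inverse_scheme c"] conjI wf_inverse_scheme FO_inverse_scheme
    unambiguous_inverse_scheme allI impI)
  fix s1 :: "(nat, 'a txt_sym) str"
  assume "s1 \<in> TXT"
  then obtain t :: "'a txt_term" where iso: "iso_str (text_of t) s1"
    unfolding TXT_def by blast
  fix s2 assume "def_rel nw_ar (inverse_scheme c) s1 s2"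
  then have C: "consistent_parity (length (leaves t)) (text_parity c t)"
    and s2: "s2 = def_str nw_ar (inverse_scheme c) s1 []"
    using sat_consistency_fm_iso[OF iso] by (auto simp: def_rel_inverse_scheme_iff)
  let ?\<nu> = "parity_arcs (length (leaves t)) (text_parity c t)"
  have "iso_str (nw_struct (leaves t) ?\<nu>) s2"
    unfolding s2 using iso_nw_struct_inverse_scheme
    by (rule iso_str_trans) (rule def_str_iso[OF iso text_of_rel_in_dom FO_inverse_scheme wf_inverse_scheme])
  then show "\<exists>w \<nu>. is_nw w \<nu> \<and> iso_str (text_of (Phi c w \<nu>)) s1 \<and> iso_str (nw_struct w \<nu>) s2"
    using consistent_parity_Phi_inverse[OF C] iso by (intro exI[of _ "leaves t"] exI[of _ ?\<nu>]) simp
next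
  fix s1 :: "(nat, 'a txt_sym) str"
  assume "\<exists>w \<nu>. is_nw w \<nu> \<and> iso_str (text_of (Phi c w \<nu>)) s1"
  then obtain w \<nu> where "is_nw w \<nu>" and iso: "iso_str (text_of (Phi c w \<nu>)) s1"
    by blast
  then have "sat s1 (\<lambda>_. undefined) (\<lambda>_. {}) (consistency_fm c)"
    using consistent_parity_Phi sat_consistency_fm_iso[OF iso] by blast
  then show "\<exists>s2. def_rel nw_ar (inverse_scheme c) s1 s2"
    by (simp add: def_rel_inverse_scheme_iff)
qed

end
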